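(* Let $\Pi$ be an $\mathit{LP}^{\mathit{MLN}}$ program and let $\mathrm{trans}_2(\Pi)$ be the $\mathit{LP}^{\mathit{MLN}\pm}$ program whose hard formulas are $\{\alpha : F \vee \neg F \mid w : F \in \Pi\}$, whose soft integrity constraints are $\{w : \neg\neg F \mid w : F \in \Pi,\ w \neq \alpha\}$, and whose weak constraints are $\{:\sim F\,[-1,1] \mid w : F \in \Pi,\ w = \alpha\}$. Then for every interpretation $X$, $P_\Pi(X) = P^{\pm}_{\mathrm{trans}_2(\Pi)}(X)$.
   Context: Fix a finite set of propositional atoms; an interpretation is a set $X$ of atoms. For a set $\Gamma$ of propositional formulas, the reduct $\Gamma^X$ is obtained by replacing every maximal subformula of each formula of $\Gamma$ not satisfied by $X$ by $\bot$; $X$ is a stable model of $\Gamma$ if $X$ is a minimal model of $\Gamma^X$ (Ferraris' semantics). $\mathrm{SM}(\Gamma)$ is the set of stable models of $\Gamma$. A weak constraint has the form $:\sim F\,[w,l]$ with $F$ a formula, $w$ a real number and $l$ a nonnegative integer (the level). For a set $\Gamma_1$ of formulas and a set $\Gamma_2$ of weak constraints, the cost of $X$ at level $l$ is $\mathrm{cost}_l(X)=\sum\{w \mid :\sim F[w,l]\in\Gamma_2,\ X\models F\}$; the optimal stable models of $\Gamma_1\cup\Gamma_2$ are those $X\in\mathrm{SM}(\Gamma_1)$ for which there is no $Y\in\mathrm{SM}(\Gamma_1)$ and level $l$ with $\mathrm{cost}_l(Y)<\mathrm{cost}_l(X)$ and $\mathrm{cost}_{l'}(Y)=\mathrm{cost}_{l'}(X)$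 for all $l'>l$. An $\mathit{LP}^{\mathit{MLN}}$ program $\Pi$ is a finite set of weighted formulas $w:F$, $F$ a propositional formula, $w$ a real number (soft) or $\alpha$ (hard, infinite weight). For a set $\Sigma$ of weighted formulas, $\overline{\Sigma}$ drops the weights, $\Sigma_X=\{w:F\in\Sigma \mid X\models F\}$, and $\mathrm{TW}(\Sigma)=\exp(\sum_{w:F\in\Sigma} w)$ (with $\alpha$ treated as a real parameter). $\mathrm{SSM}(\Pi)=\{X \mid X$ is a stable model of $\overline{\Pi_X}\}$; $W_\Pi(X)=\mathrm{TW}(\Pi_X)$ if $X\in\mathrm{SSM}(\Pi)$ and $0$ otherwise; and $P_\Pi(X)=\lim_{\alpha\to\infty} W_\Pi(X)/\sum_{Y\in\mathrm{SSM}(\Pi)}W_\Pi(Y)$. An $\mathit{LP}^{\mathit{MLN}\pm}$ program $\Pi'$ is a set consisting of hard formulas $\alpha:F$ (set $\mathrm{hard}(\Pi')$), soft integrity constraints $w:\neg F$ with $w$ real (set $\mathrm{soft}(\Pi')$), and weak constraints (set $\mathrm{weak}(\Pi')$). $\mathrm{OSM}(\Pi')$ is the set of optimal stable models of $\overline{\mathrm{hard}(\Pi')}\cup\mathrm{weak}(\Pi')$. $W^{\pm}_{\Pi'}(X)=\mathrm{TW}(\mathrm{soft}(\Pi')_X)$ if $X\in\mathrm{OSM}(\Pi')$ and $0$ otherwise, and $P^{\pm}_{\Pi'}(X)=W^{\pm}_{\Pi'}(X)/\sum_{Y\in\mathrm{OSM}(\Pi')}W^{\pm}_{\Pi'}(Y)$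 (undefined if $\mathrm{OSM}(\Pi')$ is empty). *)

theory Defs
  imports Complex_Main
begin

datatype 'a form = Bot | Atom 'a | And "'a form" "'a form" | Or "'a form" "'a form"
  | Imp "'a form" "'a form"

definition Neg :: "'a form \<Rightarrow> 'a form" where
  "Neg F = Imp F Bot"

fun sat :: "'a set \<Rightarrow> 'a form \<Rightarrow> bool" where
  "sat X Bot = False"
| "sat X (Atom p) = (p \<in> X)"
| "sat X (And F G) = (sat X F \<and> sat X G)"
| "sat X (Or F G) = (sat X F \<or> sat X G)"
| "sat X (Imp F G) = (sat X F \<longrightarrow> sat X G)"

fun red :: "'a set \<Rightarrow> 'a form \<Rightarrow> 'a form" where
  "red X Bot = Bot"
| "red X (Atom p) = (if p \<in> X then Atom p else Bot)"
| "red X (And F G) = (if sat X (And F G) then And (red X F) (red X G) else Bot)"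
| "red X (Or F G) = (if sat X (Or F G) then Or (red X F) (red X G) else Bot)"
| "red X (Imp F G) = (if sat X (Imp F G) then Imp (red X F) (red X G) else Bot)"

definition models :: "'a set \<Rightarrow> 'a form set \<Rightarrow> bool" where
  "models X \<Gamma> = (\<forall>F\<in>\<Gamma>. sat X F)"

definition stable_model :: "'a set \<Rightarrow> 'a form set \<Rightarrow> bool" where
  "stable_model X \<Gamma> =
     (models X (red X ` \<Gamma>) \<and> (\<forall>Y. Y \<subset> X \<longrightarrow> \<not> models Y (red X ` \<Gamma>)))"

definition SM :: "'a form set \<Rightarrow> 'a set set" where
  "SM \<Gamma> = {X. stable_model X \<Gamma>}"

text \<open>A weak constraint  :~ F [w,l]  is represented by the triple (F, w, l).\<close>
type_synonym 'a weak = "'a form \<times> real \<times> nat"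

definition cost :: "'a weak set \<Rightarrow> nat \<Rightarrow> 'a set \<Rightarrow> real" where
  "cost \<Gamma>2 l X = (\<Sum>(F, w, l') \<in> {c \<in> \<Gamma>2. snd (snd c) = l \<and> sat X (fst c)}. w)"

definition optimal_SM :: "'a form set \<Rightarrow> 'a weak set \<Rightarrow> 'a set set" where
  "optimal_SM \<Gamma>1 \<Gamma>2 = {X \<in> SM \<Gamma>1. \<not> (\<exists>Y \<in> SM \<Gamma>1. \<exists>l.
       cost \<Gamma>2 l Y < cost \<Gamma>2 l X \<and> (\<forall>l'>l. cost \<Gamma>2 l' Y = cost \<Gamma>2 l' X))}"

datatype weight = Real real | Alpha

type_synonym 'a lpmln = "(weight \<times> 'a form) set"

fun wval :: "real \<Rightarrow> weight \<Rightarrow> real" where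
  "wval a (Real w) = w"
| "wval a Alpha = a"

definition sat_part :: "'a set \<Rightarrow> 'a lpmln \<Rightarrow> 'a lpmln" where
  "sat_part X \<Pi> = {wF \<in> \<Pi>. sat X (snd wF)}"

definition TW :: "real \<Rightarrow> 'a lpmln \<Rightarrow> real" where
  "TW a \<Sigma> = exp (\<Sum>(w, F) \<in> \<Sigma>. wval a w)"

definition SSM :: "'a lpmln \<Rightarrow> 'a set set" where
  "SSM \<Pi> = {X. stable_model X (snd ` sat_part X \<Pi>)}"

definition W_mln :: "'a lpmln \<Rightarrow> real \<Rightarrow> 'a set \<Rightarrow> real" where
  "W_mln \<Pi> a X = (if X \<in> SSM \<Pi> then TW a (sat_part X \<Pi>) else 0)"

definition P_ratio :: "'a lpmln \<Rightarrow> real \<Rightarrow> 'a set \<Rightarrow> real" where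
  "P_ratio \<Pi> a X = W_mln \<Pi> a X / (\<Sum>Y \<in> SSM \<Pi>. W_mln \<Pi> a Y)"

definition P_mln :: "'a lpmln \<Rightarrow> 'a set \<Rightarrow> real" where
  "P_mln \<Pi> X = Lim at_top (\<lambda>a. P_ratio \<Pi> a X)"

text \<open>hard part (formulas F of alpha:F), soft integrity constraints (w, \<not>F),
  and weak constraints.\<close>
record 'a lpmln_pm =
  hard :: "'a form set"
  soft :: "(real \<times> 'a form) set"
  weak :: "'a weak set"

definition OSM :: "'a lpmln_pm \<Rightarrow> 'a set set" where
  "OSM \<Pi>' = optimal_SM (hard \<Pi>') (weak \<Pi>')"

definition W_pm :: "'a lpmln_pm \<Rightarrow> 'a set \<Rightarrow> real" where
  "W_pm \<Pi>' X = (if X \<in> OSM \<Pi>'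
     then exp (\<Sum>(w, F) \<in> {wF \<in> soft \<Pi>'. sat X (snd wF)}. w) else 0)"

definition P_pm :: "'a lpmln_pm \<Rightarrow> 'a set \<Rightarrow> real" where
  "P_pm \<Pi>' X = W_pm \<Pi>' X / (\<Sum>Y \<in> OSM \<Pi>'. W_pm \<Pi>' Y)"

definition trans2 :: "'a lpmln \<Rightarrow> 'a lpmln_pm" where
  "trans2 \<Pi> = \<lparr> hard = {Or F (Neg F) | w F. (w, F) \<in> \<Pi>},
                 soft = {(w, Neg (Neg F)) | w F. (Real w, F) \<in> \<Pi>},
                 weak = {(F, -1, 1) | F. (Alpha, F) \<in> \<Pi>} \<rparr>"

end

theory Submission imports Defs begin

(* The hard formulas F | ~F of trans2(Pi) do not change the stable models: the reduct of
   F | ~F w.r.t. X is (equivalent to) the reduct of F when X satisfies F and is trivially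
   satisfied otherwise, so the stable models of hard(trans2 Pi) are the soft stable models
   of Pi.  The weight of such a model X is exp (s X + alpha * h X), where h X counts the
   hard rules of Pi satisfied by X and s X sums the soft weights.  Hence P_Pi is the limit of
   a softmax whose mass concentrates, as alpha tends to infinity, on the models maximising h;
   these are exactly the optimal models for the weak constraints :~ F [-1,1], and on them the
   remaining weight exp (s X) is the one given by the soft constraints w : ~~F. *)

lemma sat_red_self: "sat X (red X F) = sat X F"
  by (induction F) auto

lemma sat_red_Or_Neg: "sat Y (red X (Or F (Neg F))) = (sat X F \<longrightarrow> sat Y (red X F))"
  by (auto simp: Neg_def)

lemma SSM_eq_SM_hard_trans2: "SSM \<Pi> = SM (hard (trans2 \<Pi>))"
proof -
  have "models Y (red X ` hard (trans2 \<Pi>)) = models Y (red X ` snd ` sat_part X \<Pi>)" for X Y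
    unfolding models_def trans2_def sat_part_def using sat_red_Or_Neg by fastforce
  then show ?thesis unfolding SSM_def SM_def stable_model_def by simp
qed

lemma empty_in_SSM: "{} \<in> SSM \<Pi>"
  unfolding SSM_def stable_model_def models_def by (auto simp: sat_red_self sat_part_def)

definition hard_count :: "'a lpmln \<Rightarrow> 'a set \<Rightarrow> nat" where
  "hard_count \<Pi> X = card {F. (Alpha, F) \<in> \<Pi> \<and> sat X F}"

definition soft_weight :: "'a lpmln \<Rightarrow> 'a set \<Rightarrow> real" where
  "soft_weight \<Pi> X = (\<Sum>(w, F) \<in> sat_part X \<Pi>. wval 0 w)"

lemma TW_sat_part:
  assumes "finite \<Pi>"
  shows "TW a (sat_part X \<Pi>) = exp (soft_weight \<Pi> X + a * hard_count \<Pi> X)"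
proof -
  let ?A = "{wF \<in> sat_part X \<Pi>. fst wF = Alpha}"
  have "finite (sat_part X \<Pi>)"
    using assms by (simp add: sat_part_def)
  have wval_split: "wval a w = wval 0 w + a * (if w = Alpha then 1 else 0)" for w
    by (cases w) auto
  have "?A = (\<lambda>F. (Alpha, F)) ` {F. (Alpha, F) \<in> \<Pi> \<and> sat X F}"
    unfolding sat_part_def by force
  then have "card ?A = hard_count \<Pi> X"
    unfolding hard_count_def by (simp add: card_image inj_on_def)
  moreover have "(\<Sum>(w, F) \<in> sat_part X \<Pi>. if w = Alpha then 1 else 0) = real (card ?A)"
    using \<open>finite (sat_part X \<Pi>)\<close> by (simp add: sum.If_cases case_prod_unfold Int_def)
  ultimately show ?thesis
    unfolding TW_def soft_weight_def wval_split
    by (simp add: sum.distrib sum_distrib_left[symmetric] case_prod_unfold)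
qed

lemma soft_sum_trans2:
  assumes "finite \<Pi>"
  shows "(\<Sum>(w, F) \<in> {wF \<in> soft (trans2 \<Pi>). sat X (snd wF)}. w) = soft_weight \<Pi> X"
proof -
  let ?R = "{(r, F). (Real r, F) \<in> \<Pi> \<and> sat X F}"
  have "{wF \<in> soft (trans2 \<Pi>). sat X (snd wF)} = (\<lambda>(r, F). (r, Neg (Neg F))) ` ?R"
    unfolding trans2_def by (auto simp: Neg_def)
  moreover have "soft_weight \<Pi> X = (\<Sum>(w, F) \<in> (\<lambda>(r, F). (Real r, F)) ` ?R. wval 0 w)"
    unfolding soft_weight_def
  proof (rule sum.mono_neutral_right)
    show "finite (sat_part X \<Pi>)"
      using assms by (simp add: sat_part_def)
    show "(\<lambda>(r, F). (Real r, F)) ` ?R \<subseteq> sat_part X \<Pi>"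
      unfolding sat_part_def by auto
    show "\<forall>i \<in> sat_part X \<Pi> - (\<lambda>(r, F). (Real r, F)) ` ?R. (case i of (w, F) \<Rightarrow> wval 0 w) = 0"
      unfolding sat_part_def by (auto simp: image_iff) (metis weight.exhaust wval.simps(2))
  qed
  ultimately show ?thesis
    by (simp add: sum.reindex inj_on_def Neg_def case_prod_unfold)
qed

lemma cost_weak_trans2:
  "cost (weak (trans2 \<Pi>)) l X = (if l = 1 then - real (hard_count \<Pi> X) else 0)"
proof -
  have "{c \<in> weak (trans2 \<Pi>). snd (snd c) = l \<and> sat X (fst c)} =
     (if l = 1 then (\<lambda>F. (F, -1, 1)) ` {F. (Alpha, F) \<in> \<Pi> \<and> sat X F} else {})"
    unfolding trans2_def by auto
  then show ?thesis
    unfolding cost_def hard_count_def by (simp add: sum.reindex inj_on_def)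
qed

lemma optimal_SM_single_level:
  assumes "\<And>l X. cost \<Gamma>2 l X = (if l = k then c X else 0)"
  shows "optimal_SM \<Gamma>1 \<Gamma>2 = {X \<in> SM \<Gamma>1. \<forall>Y \<in> SM \<Gamma>1. c X \<le> c Y}"
proof -
  have "(\<exists>l. cost \<Gamma>2 l Y < cost \<Gamma>2 l X \<and> (\<forall>l'>l. cost \<Gamma>2 l' Y = cost \<Gamma>2 l' X))
      \<longleftrightarrow> c Y < c X" for X Y
  proof
    assume "\<exists>l. cost \<Gamma>2 l Y < cost \<Gamma>2 l X \<and> (\<forall>l'>l. cost \<Gamma>2 l' Y = cost \<Gamma>2 l' X)"
    then obtain l where "cost \<Gamma>2 l Y < cost \<Gamma>2 l X"
      by blast
    then show "c Y < c X"
      unfolding assms by (cases "l = k") auto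
  next
    assume "c Y < c X"
    then show "\<exists>l. cost \<Gamma>2 l Y < cost \<Gamma>2 l X \<and> (\<forall>l'>l. cost \<Gamma>2 l' Y = cost \<Gamma>2 l' X)"
      unfolding assms by (intro exI[of _ k]) auto
  qed
  then show ?thesis
    unfolding optimal_SM_def by (auto simp: not_less)
qed

lemma OSM_trans2:
  "OSM (trans2 \<Pi>) = {X \<in> SSM \<Pi>. \<forall>Y \<in> SSM \<Pi>. hard_count \<Pi> Y \<le> hard_count \<Pi> X}"
  unfolding OSM_def SSM_eq_SM_hard_trans2
  by (subst optimal_SM_single_level[OF cost_weak_trans2]) simp

lemma exists_argmax:
  fixes h :: "'b \<Rightarrow> 'c::linorder"
  assumes "finite S" "S \<noteq> {}"
  shows "\<exists>X \<in> S. \<forall>Y \<in> S. h Y \<le> h X"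
proof -
  have "Max (h ` S) \<in> h ` S"
    using assms by simp
  then obtain X where "X \<in> S" "h X = Max (h ` S)"
    by auto
  then show ?thesis
    using assms(1) by (intro bexI[of _ X]) auto
qed

lemma tendsto_exp_affine_neg_slope:
  fixes c d :: real
  assumes "d < 0"
  shows "((\<lambda>a. exp (c + a * d)) \<longlongrightarrow> 0) at_top"
proof -
  have "filterlim (\<lambda>a. d * a) at_bot at_top"
    by (rule filterlim_tendsto_neg_mult_at_bot[OF tendsto_const assms filterlim_ident])
  then have "filterlim (\<lambda>a. c + a * d) at_bot at_top"
    by (simp add: filterlim_tendsto_add_at_bot_iff[OF tendsto_const] mult.commute)
  then show ?thesis
    using exp_at_bot filterlim_compose by blast
qed

lemma tendsto_softmax_argmax:
  fixes s h :: "'b \<Rightarrow> real"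
  assumes "finite S" "S \<noteq> {}"
  defines "Opt \<equiv> {Y \<in> S. \<forall>Z \<in> S. h Z \<le> h Y}"
  shows "((\<lambda>a. (if X \<in> S then exp (s X + a * h X) else 0) / (\<Sum>Y \<in> S. exp (s Y + a * h Y)))
          \<longlongrightarrow> (if X \<in> Opt then exp (s X) else 0) / (\<Sum>Y \<in> Opt. exp (s Y))) at_top"
proof -
  define M where "M = Max (h ` S)"
  have "M \<in> h ` S" and h_le_M: "Y \<in> S \<Longrightarrow> h Y \<le> M" for Y
    unfolding M_def using assms(1,2) by auto
  then have Opt_eq: "Opt = {Y \<in> S. h Y = M}"
    unfolding Opt_def by force
  \<comment> \<open>Dividing numerator and denominator by exp (a * M) leaves terms that converge.\<close>
  define g where "g a Y = (if Y \<in> S then exp (s Y + a * (h Y - M)) else 0)" for a Y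
  have exp_split: "exp (s Y + a * h Y) = exp (a * M) * exp (s Y + a * (h Y - M))" for a Y
    by (simp add: exp_add[symmetric] algebra_simps)
  have ratio_eq: "(if X \<in> S then exp (s X + a * h X) else 0) / (\<Sum>Y \<in> S. exp (s Y + a * h Y))
      = g a X / (\<Sum>Y \<in> S. g a Y)" for a
    unfolding exp_split g_def by (simp add: sum_distrib_left[symmetric])
  have g_tendsto: "((\<lambda>a. g a Y) \<longlongrightarrow> (if Y \<in> Opt then exp (s Y) else 0)) at_top" for Y
  proof (cases "Y \<in> S \<and> h Y \<noteq> M")
    case True
    then have "h Y - M < 0"
      using h_le_M by force
    then show ?thesis
      using True tendsto_exp_affine_neg_slope by (simp add: g_def Opt_eq)
  qed (auto simp: g_def Opt_eq)
  have "((\<lambda>a. \<Sum>Y \<in> S. g a Y) \<longlongrightarrow> (\<Sum>Y \<in> S. if Y \<in> Opt then exp (s Y) else 0)) at_top"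
    by (intro tendsto_sum g_tendsto)
  also have "(\<Sum>Y \<in> S. if Y \<in> Opt then exp (s Y) else 0) = (\<Sum>Y \<in> Opt. exp (s Y))"
    using assms(1) by (simp add: sum.If_cases Opt_def Int_def)
  finally have "((\<lambda>a. \<Sum>Y \<in> S. g a Y) \<longlongrightarrow> (\<Sum>Y \<in> Opt. exp (s Y))) at_top" .
  moreover have "(\<Sum>Y \<in> Opt. exp (s Y)) \<noteq> 0"
    using exists_argmax[OF assms(1,2), of h] assms(1)
    by (intro sum_pos[THEN less_imp_neq, symmetric]) (auto simp: Opt_def)
  ultimately show ?thesis
    unfolding ratio_eq by (intro tendsto_divide g_tendsto)
qed

theorem proposition2:
  fixes \<Pi> :: "('a::finite) lpmln" and X :: "'a set"
  assumes "finite \<Pi>"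
  shows "OSM (trans2 \<Pi>) \<noteq> {}
     \<and> ((\<lambda>a. P_ratio \<Pi> a X) \<longlongrightarrow> P_pm (trans2 \<Pi>) X) at_top
     \<and> P_mln \<Pi> X = P_pm (trans2 \<Pi>) X"
proof -
  let ?s = "soft_weight \<Pi>" and ?h = "\<lambda>Y. real (hard_count \<Pi> Y)"
  have OSM_eq: "OSM (trans2 \<Pi>) = {Y \<in> SSM \<Pi>. \<forall>Z \<in> SSM \<Pi>. ?h Z \<le> ?h Y}"
    unfolding OSM_trans2 by simp
  have "finite (SSM \<Pi>)"
    by simp
  moreover have "SSM \<Pi> \<noteq> {}"
    using empty_in_SSM by blast
  ultimately have "OSM (trans2 \<Pi>) \<noteq> {}"
    unfolding OSM_eq using exists_argmax[of "SSM \<Pi>" ?h] by auto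
  have ratio_eq: "P_ratio \<Pi> a X = (if X \<in> SSM \<Pi> then exp (?s X + a * ?h X) else 0)
                                   / (\<Sum>Y \<in> SSM \<Pi>. exp (?s Y + a * ?h Y))" for a
    unfolding P_ratio_def W_mln_def TW_sat_part[OF assms] by simp
  have P_pm_eq: "P_pm (trans2 \<Pi>) X = (if X \<in> OSM (trans2 \<Pi>) then exp (?s X) else 0)
                                       / (\<Sum>Y \<in> OSM (trans2 \<Pi>). exp (?s Y))"
    unfolding P_pm_def W_pm_def soft_sum_trans2[OF assms] by simp
  have "((\<lambda>a. P_ratio \<Pi> a X) \<longlongrightarrow> P_pm (trans2 \<Pi>) X) at_top"
    unfolding ratio_eq P_pm_eq OSM_eq
    by (rule tendsto_softmax_argmax[OF \<open>finite (SSM \<Pi>)\<close> \<open>SSM \<Pi> \<noteq> {}\<close>])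
  moreover from this have "P_mln \<Pi> X = P_pm (trans2 \<Pi>) X"
    unfolding P_mln_def by (intro tendsto_Lim) simp_all
  ultimately show ?thesis
    using \<open>OSM (trans2 \<Pi>) \<noteq> {}\<close> by blast
qed

end
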